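(* For all positive definite matrices $A,B$ of the same size and all $z\in\mathbb C$, $$\|A^z-B^z\|_\infty\le|z|\,\max\{\|A\|_\infty,\|A^{-1}\|_\infty,\|B\|_\infty,\|B^{-1}\|_\infty\}^{1+|\mathrm{Re}(z)|}\,\|A-B\|_\infty .$$
   Context: $\|\cdot\|_\infty$ is the operator norm; $A^z=\exp(z\ln A)$ for positive definite $A$. *)

theory Defs
  imports "HOL-Analysis.Analysis"
begin

definition hermitian :: "complex^'n^'n \<Rightarrow> bool" where
  "hermitian A \<longleftrightarrow> (\<forall>i j. A $ i $ j = cnj (A $ j $ i))"

definition pos_def :: "complex^'n^'n \<Rightarrow> bool" where
  "pos_def A \<longleftrightarrow> hermitian A \<and>
     (\<forall>x::complex^'n. x \<noteq> 0 \<longrightarrow> 0 < Re (\<Sum>i\<in>UNIV. cnj (x $ i) * (A *v x) $ i))"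

text \<open>Operator norm w.r.t. the Euclidean norm on complex^'n.\<close>
definition opnorm :: "complex^'n^'n \<Rightarrow> real" where
  "opnorm A = onorm (\<lambda>x::complex^'n. A *v x)"

primrec mpow :: "complex^'n^'n \<Rightarrow> nat \<Rightarrow> complex^'n^'n" where
  "mpow A 0 = mat 1"
| "mpow A (Suc k) = A ** mpow A k"

definition cscale :: "complex \<Rightarrow> complex^'n^'n \<Rightarrow> complex^'n^'n" where
  "cscale c A = (\<chi> i j. c * A $ i $ j)"

definition mexp :: "complex^'n^'n \<Rightarrow> complex^'n^'n" where
  "mexp A = (\<Sum>k. cscale (1 / of_nat (fact k)) (mpow A k))"

definition mln :: "complex^'n^'n \<Rightarrow> complex^'n^'n" where
  "mln A = (THE L. hermitian L \<and> mexp L = A)"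

definition mcpow :: "complex^'n^'n \<Rightarrow> complex \<Rightarrow> complex^'n^'n" where
  "mcpow A z = mexp (cscale z (mln A))"

end

theory Submission
  imports Defs
begin

text \<open>Diagonalise \<open>A = U diag(a) U\<^sup>*\<close> and \<open>B = V diag(b) V\<^sup>*\<close>. In the coordinates
\<open>W = U\<^sup>* V\<close> the matrices \<open>A\<^sup>z - B\<^sup>z\<close> and \<open>A - B\<close> become the Schur (entrywise) products of
\<open>W\<close> with the kernels \<open>a\<^sub>i\<^sup>z - b\<^sub>j\<^sup>z\<close> and \<open>a\<^sub>i - b\<^sub>j\<close>, and the kernel \<open>ln a\<^sub>i - ln b\<^sub>j\<close> sits in
between. Each divided difference is an integral \<open>\<integral>\<^sub>0\<^sup>1 f(s)\<^sub>i g(s)\<^sub>j ds\<close>, and the Schur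
multiplier of such a kernel has operator norm at most \<open>\<integral>\<^sub>0\<^sup>1 sup|f(s)| sup|g(s)| ds\<close>,
because \<open>diag(f(s)) X diag(g(s))\<close> has norm at most \<open>sup|f(s)| sup|g(s)| \<parallel>X\<parallel>\<close>.
With \<open>M\<close> the maximum in the statement, \<open>|ln a\<^sub>i|, |ln b\<^sub>j| \<le> ln M\<close>, so the kernel of
\<open>exp(z \<cdot>)\<close> costs \<open>|z| M\<^bsup>|Re z|\<^esup>\<close>, and \<open>a\<^sub>i, b\<^sub>j \<ge> 1/M\<close>, so the kernel of \<open>ln\<close> costs
\<open>\<integral>\<^sub>0\<^sup>1 (1 - u (1 - 1/M))\<^sup>-\<^sup>2 du = M\<close>.\<close>

definition conj_transpose :: "complex^'n^'n \<Rightarrow> complex^'n^'n" where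
  "conj_transpose M = (\<chi> i j. cnj (M $ j $ i))"

definition cinner :: "complex^'n \<Rightarrow> complex^'n \<Rightarrow> complex" where
  "cinner x y = (\<Sum>i\<in>UNIV. cnj (x $ i) * y $ i)"

definition unitary :: "complex^'n^'n \<Rightarrow> bool" where
  "unitary U \<longleftrightarrow> conj_transpose U ** U = mat 1 \<and> U ** conj_transpose U = mat 1"

definition diag_mat :: "('n \<Rightarrow> complex) \<Rightarrow> complex^'n^'n" where
  "diag_mat d = (\<chi> i j. if i = j then d i else 0)"

definition schur_product :: "('n \<Rightarrow> 'n \<Rightarrow> complex) \<Rightarrow> complex^'n^'n \<Rightarrow> complex^'n^'n" where
  "schur_product K X = (\<chi> i j. K i j * X $ i $ j)"

lemma conj_transpose_conj_transpose [simp]: "conj_transpose (conj_transpose M) = M"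
  by (simp add: conj_transpose_def vec_eq_iff)

lemma conj_transpose_mult: "conj_transpose (A ** B) = conj_transpose B ** conj_transpose A"
  by (simp add: conj_transpose_def vec_eq_iff matrix_matrix_mult_def mult.commute)

lemma hermitian_iff_conj_transpose: "hermitian A \<longleftrightarrow> conj_transpose A = A"
  unfolding hermitian_def conj_transpose_def vec_eq_iff by (auto simp: eq_commute)

lemma unitary_conj_transpose: "unitary U \<Longrightarrow> unitary (conj_transpose U)"
  by (simp add: unitary_def)

lemma unitary_cancel_left: "unitary U \<Longrightarrow> P ** conj_transpose U ** U = P"
  by (simp add: unitary_def matrix_mul_assoc[symmetric])

lemma unitary_cancel_right: "unitary U \<Longrightarrow> P ** U ** conj_transpose U = P"
  by (simp add: unitary_def matrix_mul_assoc[symmetric])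

lemma matrix_mult_diff_left: "(P::'a::ring_1^'n^'m) ** (Q - R) = P ** Q - P ** R"
  by (simp add: vec_eq_iff matrix_matrix_mult_def right_diff_distrib sum_subtractf)

lemma matrix_mult_diff_right: "((Q::'a::ring_1^'n^'m) - R) ** P = Q ** P - R ** P"
  by (simp add: vec_eq_iff matrix_matrix_mult_def left_diff_distrib sum_subtractf)

lemma matrix_vector_mult_scaleR_complex: "(A::complex^'n^'n) *v (c *\<^sub>R x) = c *\<^sub>R (A *v x)"
  using linear_scale[OF matrix_vector_mul_linear] by blast

lemma cinner_mult_left: "cinner (M *v x) y = cinner x (conj_transpose M *v y)"
proof -
  have "cinner (M *v x) y = (\<Sum>i\<in>UNIV. \<Sum>j\<in>UNIV. cnj (M$i$j) * cnj (x$j) * y$i)"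
    by (simp add: cinner_def matrix_vector_mult_def sum_distrib_right)
  also have "\<dots> = (\<Sum>j\<in>UNIV. \<Sum>i\<in>UNIV. cnj (M$i$j) * cnj (x$j) * y$i)"
    by (rule sum.swap)
  also have "\<dots> = cinner x (conj_transpose M *v y)"
    by (simp add: cinner_def matrix_vector_mult_def conj_transpose_def sum_distrib_left mult_ac)
  finally show ?thesis .
qed

lemma cinner_commute: "cinner y x = cnj (cinner x y)"
  by (simp add: cinner_def mult.commute)

lemma Re_cinner: "Re (cinner x y) = inner x y"
  by (simp add: cinner_def inner_vec_def inner_complex_def)

lemma Im_cinner: "Im (cinner x y) = inner (\<chi> k. \<i> * x $ k) y"
  by (simp add: cinner_def inner_vec_def inner_complex_def)

lemma cinner_self: "cinner x x = complex_of_real ((norm x)\<^sup>2)"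
proof -
  have "cinner x x = (\<Sum>i\<in>UNIV. complex_of_real ((cmod (x$i))\<^sup>2))"
    unfolding cinner_def
    by (intro sum.cong refl) (metis complex_norm_square of_real_power mult.commute)
  also have "\<dots> = complex_of_real ((norm x)\<^sup>2)"
    by (subst of_real_sum[symmetric]) (simp add: norm_vec_def L2_set_def sum_nonneg)
  finally show ?thesis .
qed

lemma cinner_scaleR_left: "cinner (c *\<^sub>R x) y = c * cinner x y"
  by (simp add: cinner_def sum_distrib_left scaleR_conv_of_real[where 'a=complex] mult_ac)

lemma cinner_scaleR_right: "cinner x (c *\<^sub>R y) = c * cinner x y"
  by (simp add: cinner_def sum_distrib_left scaleR_conv_of_real[where 'a=complex] mult_ac)

lemma cinner_zero_right [simp]: "cinner x 0 = 0"
  by (simp add: cinner_def)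

lemma cinner_add_right: "cinner x (y + z) = cinner x y + cinner x z"
  by (simp add: cinner_def distrib_left sum.distrib)

lemma hermitian_inner_mult:
  assumes "hermitian A"
  shows "inner x (A *v y) = inner (A *v x) y"
  using cinner_mult_left[of A x y] assms by (simp add: hermitian_iff_conj_transpose flip: Re_cinner)

lemma norm_unitary_mult:
  assumes "unitary U"
  shows "norm (U *v x) = norm x"
proof -
  have "cinner (U *v x) (U *v x) = cinner x x"
    using assms by (simp add: cinner_mult_left matrix_vector_mul_assoc unitary_def)
  then have "(norm (U *v x))\<^sup>2 = (norm x)\<^sup>2"
    by (simp only: cinner_self of_real_eq_iff)
  then show ?thesis by simp
qed

lemma norm_axis_complex: "norm (axis i (1::complex)) = 1"
  by (simp add: norm_eq_1 inner_axis')

lemma diag_mat_mult_left: "(diag_mat d ** W) $ i $ j = d i * W $ i $ j"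
  by (simp add: diag_mat_def matrix_matrix_mult_def if_distrib if_distribR cong: if_cong)

lemma diag_mat_mult_right: "(W ** diag_mat d) $ i $ j = W $ i $ j * d j"
  by (simp add: diag_mat_def matrix_matrix_mult_def if_distrib if_distribR cong: if_cong)

lemma diag_mat_mult_vec: "diag_mat d *v y = (\<chi> i. d i * y $ i)"
  by (simp add: vec_eq_iff diag_mat_def matrix_vector_mult_def if_distrib if_distribR cong: if_cong)

lemma diag_mat_mult_diag_mat: "diag_mat a ** diag_mat b = diag_mat (\<lambda>i. a i * b i)"
  by (simp add: vec_eq_iff diag_mat_mult_left) (simp add: diag_mat_def)

lemma mat_1_eq_diag_mat: "mat 1 = diag_mat (\<lambda>i. 1)"
  by (simp add: mat_def diag_mat_def vec_eq_iff)

lemma conj_transpose_diag_mat_real: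
  "conj_transpose (diag_mat (\<lambda>i. complex_of_real (a i))) = diag_mat (\<lambda>i. complex_of_real (a i))"
  by (simp add: conj_transpose_def diag_mat_def vec_eq_iff)

lemma hermitian_conj_diag_mat_real:
  "hermitian (U ** diag_mat (\<lambda>i. complex_of_real (a i)) ** conj_transpose U)"
  by (simp add: hermitian_iff_conj_transpose conj_transpose_mult conj_transpose_diag_mat_real
      matrix_mul_assoc)

lemma conj_diag_mat_axis:
  assumes "unitary U"
  shows "(U ** diag_mat (\<lambda>i. complex_of_real (a i)) ** conj_transpose U) *v (U *v axis i 1)
    = a i *\<^sub>R (U *v axis i 1)"
proof -
  have "(U ** diag_mat (\<lambda>i. complex_of_real (a i)) ** conj_transpose U) *v (U *v axis i 1)
      = U *v (diag_mat (\<lambda>i. complex_of_real (a i)) *v axis i 1)"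
    using assms by (simp add: matrix_vector_mul_assoc unitary_cancel_left)
  also have "diag_mat (\<lambda>i. complex_of_real (a i)) *v axis i 1 = a i *\<^sub>R axis i 1"
    by (auto simp: vec_eq_iff diag_mat_mult_vec axis_def scaleR_conv_of_real[where 'a=complex])
  finally show ?thesis by (simp add: matrix_vector_mult_scaleR_complex)
qed

section \<open>The spectral theorem for Hermitian matrices\<close>

text \<open>Complex orthogonality to \<open>v\<close> is real orthogonality to \<open>v\<close> and to \<open>i v\<close>, and fewer than
\<open>2 CARD('n)\<close> real vectors cannot span the real space \<open>complex^'n\<close>.\<close>

lemma exists_nonzero_cinner_orthogonal:
  fixes V :: "(complex^'n) set"
  assumes "finite V" "card V < CARD('n)"
  shows "\<exists>x. x \<noteq> 0 \<and> (\<forall>v\<in>V. cinner v x = 0)"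
proof -
  define iv :: "complex^'n \<Rightarrow> complex^'n" where "iv v = (\<chi> k. \<i> * v $ k)" for v
  let ?T = "V \<union> iv ` V"
  have "card ?T \<le> 2 * card V"
    using card_Un_le[of V "iv ` V"] card_image_le[OF assms(1), of iv] by simp
  then have "dim ?T < DIM(complex^'n)"
    using dim_le_card'[of ?T] assms by simp
  then obtain x where x: "x \<noteq> 0" "\<And>y. y \<in> span ?T \<Longrightarrow> orthogonal x y"
    using orthogonal_to_subspace_exists by blast
  have "cinner v x = 0" if "v \<in> V" for v
    using x(2)[OF span_base, of v] x(2)[OF span_base, of "iv v"] that
    by (simp add: complex_eq_iff Re_cinner Im_cinner iv_def orthogonal_def inner_commute)
  then show ?thesis using x(1) by blast
qed

lemma hermitian_cinner_eigenvector_eq_0: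
  assumes "hermitian A" "A *v v = l *\<^sub>R v" "cinner v y = 0"
  shows "cinner v (A *v y) = 0"
  using assms cinner_mult_left[of A v y]
  by (simp add: hermitian_iff_conj_transpose cinner_scaleR_left)

lemma eq_0_of_linear_le_quadratic:
  fixes e c :: real
  assumes le: "\<And>t. 2 * t * e \<le> t\<^sup>2 * c" and c: "0 \<le> c" and e: "0 \<le> e"
  shows "e = 0"
proof (rule ccontr)
  assume "e \<noteq> 0"
  with e have e_pos: "0 < e" by simp
  define t where "t = e / (c + 1)"
  have t_pos: "0 < t" using e_pos c by (simp add: t_def)
  have "2 * e \<le> t * c"
    using le[of t] t_pos by (simp add: power2_eq_square algebra_simps)
  also have "t * c < e"
    using e_pos c by (simp add: t_def field_simps)
  finally show False using e_pos by simp
qed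

text \<open>The residual \<open>r = A x\<^sub>0 - q x\<^sub>0\<close> is orthogonal to \<open>x\<^sub>0\<close>; maximality of \<open>q\<close> along the
line \<open>x\<^sub>0 + t r\<close> gives \<open>2t\<parallel>r\<parallel>\<^sup>2 \<le> O(t\<^sup>2)\<close> for all \<open>t\<close>, hence \<open>r = 0\<close>.\<close>

lemma rayleigh_maximiser_is_eigenvector:
  fixes A :: "complex^'n^'n"
  assumes herm: "hermitian A" and S: "subspace S" and inv: "\<And>y. y \<in> S \<Longrightarrow> A *v y \<in> S"
    and x0: "x0 \<in> S" "norm x0 = 1"
    and max: "\<And>w. w \<in> S \<Longrightarrow> w \<bullet> (A *v w) \<le> (x0 \<bullet> (A *v x0)) * (norm w)\<^sup>2"
  shows "A *v x0 = (x0 \<bullet> (A *v x0)) *\<^sub>R x0"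
proof -
  define q where "q = x0 \<bullet> (A *v x0)"
  define r where "r = A *v x0 - q *\<^sub>R x0"
  define e where "e = r \<bullet> r"
  define c where "c = q * e - r \<bullet> (A *v r)"
  have rS: "r \<in> S"
    unfolding r_def by (intro subspace_diff subspace_mul S inv x0(1))
  have x0x0: "x0 \<bullet> x0 = 1"
    using x0(2) by (simp add: norm_eq_1)
  have x0r: "x0 \<bullet> r = 0"
    by (simp add: r_def q_def inner_diff_right x0x0)
  have rx0: "r \<bullet> x0 = 0"
    using x0r by (simp add: inner_commute)
  have rAx0: "r \<bullet> (A *v x0) = e"
    by (simp add: e_def r_def q_def inner_diff_left inner_diff_right inner_commute x0x0 x0r)
  have c_nonneg: "0 \<le> c"
    using max[OF rS] by (simp add: c_def e_def q_def power2_norm_eq_inner)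
  have perturb: "2 * t * e \<le> t\<^sup>2 * c" for t :: real
  proof -
    have "x0 + t *\<^sub>R r \<in> S"
      using rS x0(1) S by (intro subspace_add subspace_mul)
    then have "(x0 + t *\<^sub>R r) \<bullet> (A *v (x0 + t *\<^sub>R r)) \<le> q * (norm (x0 + t *\<^sub>R r))\<^sup>2"
      unfolding q_def by (rule max)
    moreover have "(norm (x0 + t *\<^sub>R r))\<^sup>2 = 1 + t\<^sup>2 * e"
      unfolding power2_norm_eq_inner by (simp add: inner_add_left inner_add_right x0x0 x0r rx0 e_def
          power2_eq_square)
    moreover have "(x0 + t *\<^sub>R r) \<bullet> (A *v (x0 + t *\<^sub>R r)) = q + 2 * t * e + t\<^sup>2 * (r \<bullet> (A *v r))"
      using hermitian_inner_mult[OF herm, of x0 r]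
      by (simp add: matrix_vector_mult_scaleR_complex inner_commute rAx0 q_def power2_eq_square
          algebra_simps)
    ultimately show ?thesis by (simp add: c_def algebra_simps)
  qed
  have "e = 0"
    using perturb c_nonneg by (rule eq_0_of_linear_le_quadratic) (simp add: e_def)
  then show ?thesis by (simp add: e_def r_def q_def)
qed

lemma hermitian_eigenvector_in_invariant_subspace:
  fixes A :: "complex^'n^'n"
  assumes herm: "hermitian A" and S: "subspace S" and inv: "\<And>y. y \<in> S \<Longrightarrow> A *v y \<in> S"
    and x: "x \<in> S" "x \<noteq> 0"
  shows "\<exists>x0\<in>S. norm x0 = 1 \<and> (\<exists>l::real. A *v x0 = l *\<^sub>R x0)"
proof -
  define K where "K = S \<inter> sphere 0 1"
  define f where "f y = y \<bullet> (A *v y)" for y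
  have "compact K"
    unfolding K_def by (intro closed_Int_compact closed_subspace S compact_sphere)
  moreover have "(1 / norm x) *\<^sub>R x \<in> K"
    using x by (simp add: K_def subspace_mul S)
  moreover have "continuous_on K f"
    unfolding f_def by (intro continuous_intros linear_continuous_on matrix_vector_mul_bounded_linear)
  ultimately obtain x0 where x0: "x0 \<in> K" and max_K: "\<And>y. y \<in> K \<Longrightarrow> f y \<le> f x0"
    using continuous_attains_sup[of K f] by blast
  have max: "f w \<le> f x0 * (norm w)\<^sup>2" if "w \<in> S" for w
  proof (cases "w = 0")
    case False
    then have "(1 / norm w) *\<^sub>R w \<in> K" using that by (simp add: K_def subspace_mul S)
    then have "f ((1 / norm w) *\<^sub>R w) \<le> f x0" by (rule max_K)
    then have "(1 / norm w)\<^sup>2 * f w \<le> f x0"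
      by (simp add: f_def matrix_vector_mult_scaleR_complex power2_eq_square)
    then show ?thesis using False by (simp add: field_simps power2_eq_square)
  qed (simp add: f_def)
  then have "A *v x0 = f x0 *\<^sub>R x0"
    using x0 unfolding f_def K_def by (intro rayleigh_maximiser_is_eigenvector[OF herm S inv]) auto
  then show ?thesis using x0 by (auto simp: K_def)
qed

definition orthonormal_eigenvectors_on :: "complex^'n^'n \<Rightarrow> 'n set \<Rightarrow> ('n \<Rightarrow> complex^'n) \<Rightarrow> bool"
  where "orthonormal_eigenvectors_on A I col \<longleftrightarrow>
     (\<forall>i\<in>I. norm (col i) = 1 \<and> (\<exists>l::real. A *v col i = l *\<^sub>R col i)) \<and>
     (\<forall>i\<in>I. \<forall>j\<in>I. i \<noteq> j \<longrightarrow> cinner (col i) (col j) = 0)"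

lemma hermitian_orthonormal_eigenvectors_on:
  fixes A :: "complex^'n^'n"
  assumes herm: "hermitian A"
  shows "\<exists>col. orthonormal_eigenvectors_on A I col"
proof -
  have "finite I" by simp
  then show ?thesis
  proof (induction I rule: finite_induct)
    case empty
    show ?case by (simp add: orthonormal_eigenvectors_on_def)
  next
    case (insert i I)
    then obtain col where col: "orthonormal_eigenvectors_on A I col" by blast
    define S where "S = {x. \<forall>j\<in>I. cinner (col j) x = 0}"
    have "subspace S"
      by (auto simp: S_def subspace_def cinner_add_right cinner_scaleR_right)
    moreover have "A *v y \<in> S" if "y \<in> S" for y
      using col that hermitian_cinner_eigenvector_eq_0[OF herm]
      unfolding S_def orthonormal_eigenvectors_on_def by blast
    moreover obtain x where "x \<noteq> 0" "x \<in> S"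
    proof -
      have "card (col ` I) < CARD('n)"
        using card_image_le[OF insert(1), of col] card_insert_disjoint[OF insert(1,2)]
          card_mono[of UNIV "insert i I"] by simp
      then show thesis
        using exists_nonzero_cinner_orthogonal[of "col ` I"] that by (auto simp: S_def)
    qed
    ultimately obtain x0 where x0: "x0 \<in> S" "norm x0 = 1" "\<exists>l::real. A *v x0 = l *\<^sub>R x0"
      using hermitian_eigenvector_in_invariant_subspace[OF herm] by blast
    have "cinner x0 (col j) = 0" if "j \<in> I" for j
      using x0(1) that cinner_commute[of x0 "col j"] by (simp add: S_def)
    then have "orthonormal_eigenvectors_on A (insert i I) (col(i := x0))"
      using col x0 insert(2) unfolding orthonormal_eigenvectors_on_def S_def by auto
    then show ?case by blast
  qed
qed

lemma unitary_diagonalization_of_eigenbasis: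
  fixes A :: "complex^'n^'n" and col :: "'n \<Rightarrow> complex^'n"
  assumes orth: "\<And>j k. cinner (col j) (col k) = (if j = k then 1 else 0)"
    and eig: "\<And>j. A *v col j = a j *\<^sub>R col j"
  defines "U \<equiv> \<chi> i j. col j $ i"
  shows "unitary U" and "A = U ** diag_mat (\<lambda>i. complex_of_real (a i)) ** conj_transpose U"
proof -
  have UU: "conj_transpose U ** U = mat 1"
    using orth by (simp add: vec_eq_iff mat_def conj_transpose_def U_def matrix_matrix_mult_def cinner_def)
  then have UU': "U ** conj_transpose U = mat 1"
    using matrix_left_right_inverse by blast
  then show "unitary U" using UU by (simp add: unitary_def)
  have "(A ** U) $ i $ k = complex_of_real (a k) * col k $ i" for i k
  proof -
    have "(A ** U) $ i $ k = (A *v col k) $ i"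
      by (simp add: U_def matrix_matrix_mult_def matrix_vector_mult_def)
    then show ?thesis by (simp add: eig scaleR_conv_of_real[where 'a=complex])
  qed
  then have "A ** U = U ** diag_mat (\<lambda>i. complex_of_real (a i))"
    by (simp add: vec_eq_iff diag_mat_mult_right U_def mult.commute)
  then have "A ** U ** conj_transpose U = U ** diag_mat (\<lambda>i. complex_of_real (a i)) ** conj_transpose U"
    by simp
  then show "A = U ** diag_mat (\<lambda>i. complex_of_real (a i)) ** conj_transpose U"
    by (simp add: UU' flip: matrix_mul_assoc)
qed

theorem hermitian_unitary_diagonalization:
  fixes A :: "complex^'n^'n"
  assumes herm: "hermitian A"
  obtains U a where "unitary U" "A = U ** diag_mat (\<lambda>i. complex_of_real (a i)) ** conj_transpose U"
proof -
  obtain col where col: "orthonormal_eigenvectors_on A UNIV col"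
    using hermitian_orthonormal_eigenvectors_on[OF herm] by blast
  have "cinner (col j) (col k) = (if j = k then 1 else 0)" for j k
    using col cinner_self[of "col j"] unfolding orthonormal_eigenvectors_on_def by auto
  moreover have "\<forall>j. \<exists>l::real. A *v col j = l *\<^sub>R col j"
    using col unfolding orthonormal_eigenvectors_on_def by blast
  then obtain a where "\<And>j. A *v col j = a j *\<^sub>R col j"
    by metis
  ultimately show ?thesis
    using unitary_diagonalization_of_eigenbasis that by blast
qed

section \<open>Functional calculus of unitarily diagonalised matrices\<close>

lemma mpow_conj:
  assumes "unitary U"
  shows "mpow (U ** X ** conj_transpose U) k = U ** mpow X k ** conj_transpose U"
  using assms
  by (induction k) (simp_all add: unitary_def matrix_mul_assoc unitary_cancel_left)

lemma mpow_diag_mat: "mpow (diag_mat d) k = diag_mat (\<lambda>i. d i ^ k)"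
  by (induction k) (simp_all add: mat_1_eq_diag_mat diag_mat_mult_diag_mat)

lemma cscale_eq_diag_mat_mult: "cscale c X = diag_mat (\<lambda>i. c) ** X"
  by (simp add: cscale_def vec_eq_iff diag_mat_mult_left)

lemma cscale_conj: "cscale c (U ** X ** V) = U ** cscale c X ** V"
proof -
  have "diag_mat (\<lambda>i. c) ** U = U ** diag_mat (\<lambda>i. c)"
    by (simp add: vec_eq_iff diag_mat_mult_left diag_mat_mult_right mult.commute)
  then show ?thesis
    by (simp add: cscale_eq_diag_mat_mult matrix_mul_assoc)
qed

lemma cscale_diag_mat: "cscale c (diag_mat d) = diag_mat (\<lambda>i. c * d i)"
  by (simp add: cscale_eq_diag_mat_mult diag_mat_mult_diag_mat)

lemma diag_mat_sums:
  assumes "\<And>i. (\<lambda>k. g k i) sums L i"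
  shows "(\<lambda>k. diag_mat (g k)) sums diag_mat L"
proof -
  have "(\<Sum>k<n. diag_mat (g k)) = diag_mat (\<lambda>i. \<Sum>k<n. g k i)" for n
    by (simp add: vec_eq_iff diag_mat_def)
  then show ?thesis
    using assms unfolding sums_def diag_mat_def by (auto intro!: tendsto_vec_lambda)
qed

lemma linear_matrix_conj: "linear (\<lambda>M::complex^'n^'n. U ** M ** V)"
  by (rule linearI)
    (simp_all add: vec_eq_iff matrix_matrix_mult_def distrib_left distrib_right sum.distrib
      scaleR_sum_right sum_distrib_right)

lemma mexp_conj_diag_mat:
  assumes U: "unitary U"
  shows "mexp (U ** diag_mat d ** conj_transpose U) = U ** diag_mat (\<lambda>i. exp (d i)) ** conj_transpose U"
proof -
  have "(\<lambda>k. 1 / of_nat (fact k) * x ^ k) sums exp x" for x :: complex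
    using exp_converges[of x] by (simp add: scaleR_conv_of_real field_simps)
  then have "(\<lambda>k. diag_mat (\<lambda>i. 1 / of_nat (fact k) * d i ^ k)) sums diag_mat (\<lambda>i. exp (d i))"
    by (intro diag_mat_sums)
  then have "(\<lambda>k. U ** diag_mat (\<lambda>i. 1 / of_nat (fact k) * d i ^ k) ** conj_transpose U)
      sums (U ** diag_mat (\<lambda>i. exp (d i)) ** conj_transpose U)"
    by (rule bounded_linear.sums[OF linear_matrix_conj[THEN linear_conv_bounded_linear[THEN iffD1]]])
  moreover have "cscale (1 / of_nat (fact k)) (mpow (U ** diag_mat d ** conj_transpose U) k)
      = U ** diag_mat (\<lambda>i. 1 / of_nat (fact k) * d i ^ k) ** conj_transpose U" for k
    by (simp add: mpow_conj[OF U] mpow_diag_mat cscale_conj cscale_diag_mat)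
  ultimately show ?thesis
    unfolding mexp_def by (simp add: sums_unique[symmetric])
qed

text \<open>Injectivity of \<open>exp\<close> on real diagonals: conjugating by \<open>W = U\<^sup>* V\<close> turns the
hypothesis into \<open>e\<^bsup>a\<^sub>i\<^esup> W\<^sub>i\<^sub>j = W\<^sub>i\<^sub>j e\<^bsup>b\<^sub>j\<^esup>\<close>, so \<open>W\<^sub>i\<^sub>j = 0\<close> unless \<open>a\<^sub>i = b\<^sub>j\<close>.\<close>

lemma conj_diag_mat_eq_of_exp_eq:
  assumes U: "unitary U" and V: "unitary V"
    and E: "U ** diag_mat (\<lambda>i. complex_of_real (exp (a i))) ** conj_transpose U
          = V ** diag_mat (\<lambda>i. complex_of_real (exp (b i))) ** conj_transpose V"
  shows "U ** diag_mat (\<lambda>i. complex_of_real (a i)) ** conj_transpose U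
       = V ** diag_mat (\<lambda>i. complex_of_real (b i)) ** conj_transpose V"
proof -
  define W where "W = conj_transpose U ** V"
  have "diag_mat (\<lambda>i. complex_of_real (exp (a i))) ** W
      = conj_transpose U ** (U ** diag_mat (\<lambda>i. complex_of_real (exp (a i))) ** conj_transpose U) ** V"
    using U by (simp add: W_def matrix_mul_assoc unitary_def)
  also have "\<dots> = W ** diag_mat (\<lambda>i. complex_of_real (exp (b i)))"
    using V by (simp add: E W_def matrix_mul_assoc unitary_cancel_left)
  finally have "complex_of_real (exp (a i)) * W $ i $ j = W $ i $ j * complex_of_real (exp (b j))" for i j
    by (metis diag_mat_mult_left diag_mat_mult_right)
  then have "W $ i $ j = 0 \<or> a i = b j" for i j
    by (auto simp: mult.commute)
  then have "diag_mat (\<lambda>i. complex_of_real (a i)) ** W = W ** diag_mat (\<lambda>i. complex_of_real (b i))"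
    by (auto simp: vec_eq_iff diag_mat_mult_left diag_mat_mult_right mult.commute)
  then have "U ** (diag_mat (\<lambda>i. complex_of_real (a i)) ** W) ** conj_transpose V
      = U ** (W ** diag_mat (\<lambda>i. complex_of_real (b i))) ** conj_transpose V"
    by simp
  then show ?thesis
    using U V by (simp add: W_def matrix_mul_assoc unitary_def unitary_cancel_right)
qed

lemma mln_conj_diag_mat:
  assumes U: "unitary U" and a_pos: "\<And>i. 0 < a i"
    and A: "A = U ** diag_mat (\<lambda>i. complex_of_real (a i)) ** conj_transpose U"
  shows "mln A = U ** diag_mat (\<lambda>i. complex_of_real (ln (a i))) ** conj_transpose U"
  unfolding mln_def
proof (rule the_equality)
  show "hermitian (U ** diag_mat (\<lambda>i. complex_of_real (ln (a i))) ** conj_transpose U) \<and>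
      mexp (U ** diag_mat (\<lambda>i. complex_of_real (ln (a i))) ** conj_transpose U) = A"
    using a_pos by (simp add: hermitian_conj_diag_mat_real mexp_conj_diag_mat[OF U] A exp_of_real)
next
  fix K assume K: "hermitian K \<and> mexp K = A"
  then obtain V b where V: "unitary V"
    and K_eq: "K = V ** diag_mat (\<lambda>i. complex_of_real (b i)) ** conj_transpose V"
    using hermitian_unitary_diagonalization by blast
  have "U ** diag_mat (\<lambda>i. complex_of_real (exp (ln (a i)))) ** conj_transpose U
      = V ** diag_mat (\<lambda>i. complex_of_real (exp (b i))) ** conj_transpose V"
    using K a_pos by (simp add: A K_eq mexp_conj_diag_mat[OF V] exp_of_real)
  from conj_diag_mat_eq_of_exp_eq[OF U V this]
  show "K = U ** diag_mat (\<lambda>i. complex_of_real (ln (a i))) ** conj_transpose U"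
    by (simp add: K_eq)
qed

lemma mcpow_conj_diag_mat:
  assumes U: "unitary U" and a_pos: "\<And>i. 0 < a i"
    and A: "A = U ** diag_mat (\<lambda>i. complex_of_real (a i)) ** conj_transpose U"
  shows "mcpow A z = U ** diag_mat (\<lambda>i. exp (z * complex_of_real (ln (a i)))) ** conj_transpose U"
  unfolding mcpow_def mln_conj_diag_mat[OF U a_pos A] cscale_conj cscale_diag_mat
  by (rule mexp_conj_diag_mat[OF U])

lemma norm_matrix_vector_le_opnorm: "norm (M *v x) \<le> opnorm M * norm x"
  unfolding opnorm_def by (rule onorm[OF matrix_vector_mul_bounded_linear])

lemma opnorm_nonneg: "0 \<le> opnorm M"
  unfolding opnorm_def by (rule onorm_pos_le[OF matrix_vector_mul_bounded_linear])

lemma opnorm_le: "(\<And>x. norm (M *v x) \<le> b * norm x) \<Longrightarrow> opnorm M \<le> b"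
  unfolding opnorm_def by (rule onorm_le)

lemma opnorm_unitary_conj_le:
  assumes U: "unitary U" and V: "unitary V"
  shows "opnorm (U ** Y ** V) \<le> opnorm Y"
proof (rule opnorm_le)
  fix x
  have "norm ((U ** Y ** V) *v x) = norm (Y *v (V *v x))"
    using U by (simp add: norm_unitary_mult flip: matrix_vector_mul_assoc)
  also have "\<dots> \<le> opnorm Y * norm x"
    using norm_matrix_vector_le_opnorm[of Y "V *v x"] V by (simp add: norm_unitary_mult)
  finally show "norm ((U ** Y ** V) *v x) \<le> opnorm Y * norm x" .
qed

lemma opnorm_unitary_conj:
  assumes U: "unitary U" and V: "unitary V"
  shows "opnorm (U ** Y ** V) = opnorm Y"
proof (rule antisym)
  have "Y = conj_transpose U ** (U ** Y ** V) ** conj_transpose V"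
    using U V by (simp add: unitary_def matrix_mul_assoc unitary_cancel_right)
  then show "opnorm Y \<le> opnorm (U ** Y ** V)"
    using opnorm_unitary_conj_le[OF unitary_conj_transpose[OF U] unitary_conj_transpose[OF V]]
    by metis
qed (rule opnorm_unitary_conj_le[OF U V])

lemma eigenvalue_le_opnorm:
  assumes "M *v u = l *\<^sub>R u" "norm u = 1"
  shows "\<bar>l\<bar> \<le> opnorm M"
  using norm_matrix_vector_le_opnorm[of M u] assms by simp

lemma norm_diag_mat_mult_le:
  assumes "\<And>i. cmod (d i) \<le> B"
  shows "norm (diag_mat d *v y) \<le> B * norm y"
proof -
  have "norm (diag_mat d *v y) = L2_set (\<lambda>i. cmod (d i) * cmod (y $ i)) UNIV"
    by (simp add: norm_vec_def diag_mat_mult_vec norm_mult)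
  also have "\<dots> \<le> L2_set (\<lambda>i. B * cmod (y $ i)) UNIV"
    by (rule L2_set_mono) (auto intro: mult_right_mono assms)
  also have "\<dots> = B * norm y"
  proof -
    have "0 \<le> B" using norm_ge_zero[of "d undefined"] assms[of undefined] by linarith
    then show ?thesis by (simp add: norm_vec_def L2_set_right_distrib)
  qed
  finally show ?thesis .
qed

lemma matrix_inv_eqI:
  fixes A B :: "'a::semiring_1^'n^'n"
  assumes AB: "A ** B = mat 1" and BA: "B ** A = mat 1"
  shows "matrix_inv A = B"
proof -
  have inv: "A ** matrix_inv A = mat 1 \<and> matrix_inv A ** A = mat 1"
    using someI[of "\<lambda>A'. A ** A' = mat 1 \<and> A' ** A = mat 1" B] AB BA
    unfolding matrix_inv_def by blast
  have "matrix_inv A = matrix_inv A ** (A ** B)"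
    by (simp add: AB)
  also have "\<dots> = B"
    using inv by (simp add: matrix_mul_assoc)
  finally show ?thesis .
qed

lemma matrix_inv_conj_diag_mat:
  assumes U: "unitary U" and a: "\<And>i. a i \<noteq> 0"
  shows "matrix_inv (U ** diag_mat (\<lambda>i. complex_of_real (a i)) ** conj_transpose U)
    = U ** diag_mat (\<lambda>i. complex_of_real (1 / a i)) ** conj_transpose U"
proof -
  have conj_mult: "U ** diag_mat c ** conj_transpose U ** (U ** diag_mat c' ** conj_transpose U)
      = U ** (diag_mat c ** diag_mat c') ** conj_transpose U" for c c'
    using U by (simp add: matrix_mul_assoc unitary_cancel_left)
  have "diag_mat (\<lambda>i. complex_of_real (a i)) ** diag_mat (\<lambda>i. complex_of_real (1 / a i)) = mat 1"
    "diag_mat (\<lambda>i. complex_of_real (1 / a i)) ** diag_mat (\<lambda>i. complex_of_real (a i)) = mat 1"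
    using a by (simp_all add: diag_mat_mult_diag_mat mat_1_eq_diag_mat)
  then show ?thesis
    using U by (intro matrix_inv_eqI) (simp_all add: conj_mult unitary_def)
qed

lemma pos_def_unitary_diagonalization:
  fixes A :: "complex^'n^'n"
  assumes pd: "pos_def A"
  obtains U a where "unitary U" "A = U ** diag_mat (\<lambda>i. complex_of_real (a i)) ** conj_transpose U"
    "\<And>i. 0 < a i" "\<And>i. a i \<le> opnorm A" "\<And>i. 1 / a i \<le> opnorm (matrix_inv A)"
proof -
  obtain U a where U: "unitary U"
    and A: "A = U ** diag_mat (\<lambda>i. complex_of_real (a i)) ** conj_transpose U"
    using hermitian_unitary_diagonalization pd pos_def_def by blast
  define u where "u i = U *v axis i 1" for i
  have u_norm: "norm (u i) = 1" for i
    using U by (simp add: u_def norm_unitary_mult norm_axis_complex)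
  have Au: "A *v u i = a i *\<^sub>R u i" for i
    unfolding u_def A by (rule conj_diag_mat_axis[OF U])
  have a_pos: "0 < a i" for i
  proof -
    have "0 < Re (cinner (u i) (A *v u i))"
      using pd u_norm[of i] unfolding pos_def_def cinner_def by (metis norm_zero zero_neq_one)
    then show ?thesis
      by (simp add: Au cinner_scaleR_right cinner_self u_norm)
  qed
  have "matrix_inv A *v u i = (1 / a i) *\<^sub>R u i" for i
    unfolding u_def A matrix_inv_conj_diag_mat[OF U less_imp_neq[OF a_pos, symmetric]]
    by (rule conj_diag_mat_axis[OF U])
  then have "\<bar>1 / a i\<bar> \<le> opnorm (matrix_inv A)" for i
    by (rule eigenvalue_le_opnorm[OF _ u_norm])
  moreover have "\<bar>a i\<bar> \<le> opnorm A" for i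
    by (rule eigenvalue_le_opnorm[OF Au u_norm])
  ultimately show ?thesis
    using that U A a_pos by (simp add: abs_of_pos)
qed

lemma pos_def_unitary_diagonalization_within:
  fixes A :: "complex^'n^'n"
  assumes "pos_def A" "opnorm A \<le> M" "opnorm (matrix_inv A) \<le> M"
  obtains U a where "unitary U" "A = U ** diag_mat (\<lambda>i. complex_of_real (a i)) ** conj_transpose U"
    "\<And>i. 0 < a i" "\<And>i. 1 / M \<le> a i" "\<And>i. a i \<le> M"
proof -
  obtain U a where U: "unitary U" "A = U ** diag_mat (\<lambda>i. complex_of_real (a i)) ** conj_transpose U"
    and a: "\<And>i. 0 < a i" "\<And>i. a i \<le> opnorm A" "\<And>i. 1 / a i \<le> opnorm (matrix_inv A)"
    using pos_def_unitary_diagonalization[OF assms(1)] by blast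
  have a_le: "a i \<le> M" and inv_a_le: "1 / a i \<le> M" for i
    using a[of i] assms(2,3) by auto
  have "0 < M"
    using a(1) a_le by (meson order_less_le_trans)
  then have "1 / M \<le> a i" for i
    using a(1)[of i] inv_a_le[of i] by (simp add: field_simps)
  then show ?thesis using that U a(1) a_le by blast
qed

section \<open>Schur multipliers\<close>

lemma conj_diag_mat_diff_eq_schur_product:
  assumes U: "unitary U" and V: "unitary V"
  shows "U ** diag_mat d ** conj_transpose U - V ** diag_mat e ** conj_transpose V
       = U ** schur_product (\<lambda>i j. d i - e j) (conj_transpose U ** V) ** conj_transpose V"
proof -
  have "U ** diag_mat d ** conj_transpose U
      = U ** (diag_mat d ** (conj_transpose U ** V)) ** conj_transpose V"
    using V by (simp add: matrix_mul_assoc unitary_cancel_right)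
  moreover have "V ** diag_mat e ** conj_transpose V
      = U ** ((conj_transpose U ** V) ** diag_mat e) ** conj_transpose V"
    using U by (simp add: matrix_mul_assoc unitary_def)
  ultimately have "U ** diag_mat d ** conj_transpose U - V ** diag_mat e ** conj_transpose V
      = U ** (diag_mat d ** (conj_transpose U ** V) - (conj_transpose U ** V) ** diag_mat e)
          ** conj_transpose V"
    by (simp add: matrix_mult_diff_left matrix_mult_diff_right)
  also have "diag_mat d ** (conj_transpose U ** V) - (conj_transpose U ** V) ** diag_mat e
      = schur_product (\<lambda>i j. d i - e j) (conj_transpose U ** V)"
    by (simp add: vec_eq_iff schur_product_def diag_mat_mult_left diag_mat_mult_right
        left_diff_distrib mult.commute)
  finally show ?thesis .
qed

lemma schur_product_schur_product:
  "schur_product K (schur_product L X) = schur_product (\<lambda>i j. K i j * L i j) X"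
  by (simp add: schur_product_def vec_eq_iff mult.assoc)

lemma has_integral_schur_product_mult_vec:
  fixes X :: "complex^'n^'n" and f g :: "real \<Rightarrow> 'n \<Rightarrow> complex"
  assumes cont_f: "\<And>i. continuous_on {0..1} (\<lambda>s. f s i)"
    and cont_g: "\<And>j. continuous_on {0..1} (\<lambda>s. g s j)"
  shows "((\<lambda>s. diag_mat (f s) *v (X *v (diag_mat (g s) *v x))) has_integral
    schur_product (\<lambda>i j. integral {0..1} (\<lambda>s. f s i * g s j)) X *v x) {0..1}"
proof -
  define h where "h s = diag_mat (f s) *v (X *v (diag_mat (g s) *v x))" for s
  have h_eq: "h = (\<lambda>s. \<chi> i. \<Sum>j\<in>UNIV. f s i * g s j * (X $ i $ j * x $ j))"
    by (simp add: fun_eq_iff vec_eq_iff h_def diag_mat_mult_vec)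
      (simp add: matrix_vector_mult_def sum_distrib_left mult_ac)
  have h_int: "h integrable_on {0..1}"
    unfolding h_eq by (intro integrable_continuous_real continuous_intros cont_f cont_g)
  have fg_int: "(\<lambda>s. f s i * g s j) integrable_on {0..1}" for i j
    by (intro integrable_continuous_real continuous_intros cont_f cont_g)
  have "integral {0..1} h $ i
      = (schur_product (\<lambda>i j. integral {0..1} (\<lambda>s. f s i * g s j)) X *v x) $ i" for i
  proof -
    have "integral {0..1} h $ i = integral {0..1} (\<lambda>s. h s $ i)"
      using integral_linear[OF h_int bounded_linear_vec_nth[of i]] by (simp add: o_def)
    also have "\<dots> = integral {0..1} (\<lambda>s. \<Sum>j\<in>UNIV. f s i * g s j * (X $ i $ j * x $ j))"
      by (simp only: h_eq vec_lambda_beta)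
    also have "\<dots> = (\<Sum>j\<in>UNIV. integral {0..1} (\<lambda>s. f s i * g s j * (X $ i $ j * x $ j)))"
      by (rule integral_sum) (auto intro: integrable_on_mult_left fg_int)
    also have "\<dots> = (\<Sum>j\<in>UNIV. integral {0..1} (\<lambda>s. f s i * g s j) * (X $ i $ j * x $ j))"
      by simp
    also have "\<dots> = (schur_product (\<lambda>i j. integral {0..1} (\<lambda>s. f s i * g s j)) X *v x) $ i"
      by (simp add: schur_product_def matrix_vector_mult_def mult.assoc)
    finally show ?thesis .
  qed
  then have "integral {0..1} h = schur_product (\<lambda>i j. integral {0..1} (\<lambda>s. f s i * g s j)) X *v x"
    by (simp add: vec_eq_iff)
  with integrable_integral[OF h_int] show ?thesis
    unfolding h_def[symmetric] by simp
qed

lemma opnorm_schur_product_integral_le: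
  fixes X :: "complex^'n^'n" and f g :: "real \<Rightarrow> 'n \<Rightarrow> complex" and F G :: "real \<Rightarrow> real"
  assumes cont_f: "\<And>i. continuous_on {0..1} (\<lambda>s. f s i)"
    and cont_g: "\<And>j. continuous_on {0..1} (\<lambda>s. g s j)"
    and cont_FG: "continuous_on {0..1} (\<lambda>s. F s * G s)"
    and bound_f: "\<And>s i. s \<in> {0..1} \<Longrightarrow> cmod (f s i) \<le> F s"
    and bound_g: "\<And>s j. s \<in> {0..1} \<Longrightarrow> cmod (g s j) \<le> G s"
    and C: "integral {0..1} (\<lambda>s. F s * G s) \<le> C"
  shows "opnorm (schur_product (\<lambda>i j. integral {0..1} (\<lambda>s. f s i * g s j)) X) \<le> C * opnorm X"
proof (rule opnorm_le)
  fix x :: "complex^'n"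
  define h where "h s = diag_mat (f s) *v (X *v (diag_mat (g s) *v x))" for s
  have h_int: "(h has_integral schur_product (\<lambda>i j. integral {0..1} (\<lambda>s. f s i * g s j)) X *v x)
      {0..1}"
    unfolding h_def by (rule has_integral_schur_product_mult_vec[OF cont_f cont_g])
  have h_bound: "norm (h s) \<le> F s * G s * (opnorm X * norm x)" if s: "s \<in> {0..1}" for s
  proof -
    have F_nonneg: "0 \<le> F s"
      using bound_f[OF s] norm_ge_zero order_trans by blast
    have "norm (h s) \<le> F s * norm (X *v (diag_mat (g s) *v x))"
      unfolding h_def by (rule norm_diag_mat_mult_le) (rule bound_f[OF s])
    also have "\<dots> \<le> F s * (opnorm X * (G s * norm x))"
      using norm_diag_mat_mult_le[of "g s" "G s" x] bound_g[OF s]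
        norm_matrix_vector_le_opnorm[of X "diag_mat (g s) *v x"]
      by (intro mult_left_mono F_nonneg)
        (meson mult_left_mono opnorm_nonneg order_trans)
    finally show ?thesis by (simp add: mult_ac)
  qed
  have "(\<lambda>s. F s * G s * (opnorm X * norm x)) integrable_on {0..1}"
    by (intro integrable_continuous_real continuous_intros cont_FG)
  then have "norm (integral {0..1} h) \<le> integral {0..1} (\<lambda>s. F s * G s * (opnorm X * norm x))"
    by (rule integral_norm_bound_integral[OF has_integral_integrable[OF h_int] _ h_bound])
  also have "\<dots> \<le> C * (opnorm X * norm x)"
    using C by (simp add: mult_right_mono opnorm_nonneg)
  finally show "norm (schur_product (\<lambda>i j. integral {0..1} (\<lambda>s. f s i * g s j)) X *v x)
      \<le> C * opnorm X * norm x"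
    by (simp add: integral_unique[OF h_int] mult_ac)
qed

section \<open>Divided differences of \<open>exp\<close> and \<open>ln\<close> as integrals\<close>

lemma exp_divided_difference_integral:
  fixes p q :: real and z :: complex
  shows "integral {0..1} (\<lambda>s. z * exp (of_real s * z * of_real p) * exp (of_real (1 - s) * z * of_real q))
           * (of_real p - of_real q) = exp (z * of_real p) - exp (z * of_real q)"
proof -
  define d where "d = z * (of_real p - of_real q)"
  define c where "c = z * of_real q"
  have integrand: "z * exp (of_real s * z * of_real p) * exp (of_real (1 - s) * z * of_real q)
           * (of_real p - of_real q) = exp (c + of_real s * d) * d" for s :: real
    by (simp add: c_def d_def mult_ac flip: exp_add) (simp add: algebra_simps)
  have "((\<lambda>s. exp (c + of_real s * d)) has_vector_derivative exp (c + of_real s * d) * d)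
      (at s within {0..1})" for s
    by (rule has_vector_derivative_real_field) (auto intro!: derivative_eq_intros)
  then have "((\<lambda>s. exp (c + of_real s * d) * d) has_integral exp (c + d) - exp c) {0..1}"
    using fundamental_theorem_of_calculus[of 0 1 "\<lambda>s. exp (c + of_real s * d)"] by simp
  then have "integral {0..1} (\<lambda>s. exp (c + of_real s * d) * d) = exp (c + d) - exp c"
    by (rule integral_unique)
  moreover have "exp (c + d) - exp c = exp (z * of_real p) - exp (z * of_real q)"
    by (simp add: c_def d_def algebra_simps)
  ultimately show ?thesis
    by (simp only: integral_mult_left[symmetric] integrand)
qed

lemma one_plus_scaled_pos:
  fixes a u :: real
  assumes "0 < a" "u \<in> {0..1}"
  shows "0 < 1 + u * (a - 1)"
proof (cases "1 \<le> a")
  case True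
  then show ?thesis using assms by (simp add: add_pos_nonneg)
next
  case False
  then have "u * (1 - a) \<le> 1 * (1 - a)"
    using assms by (intro mult_right_mono) auto
  then show ?thesis using assms by (simp add: algebra_simps)
qed

lemma one_plus_scaled_nonzero: "0 < a \<Longrightarrow> \<forall>u\<in>{0..1}. 1 + u * (a - 1) \<noteq> (0::real)"
  using one_plus_scaled_pos by force

lemma ln_divided_difference_integral:
  fixes a b :: real
  assumes a: "0 < a" and b: "0 < b"
  shows "integral {0..1} (\<lambda>u. 1 / (1 + u * (a - 1)) * (1 / (1 + u * (b - 1)))) * (a - b)
    = ln a - ln b"
proof -
  define H where "H u = ln (1 + u * (a - 1)) - ln (1 + u * (b - 1))" for u :: real
  have "(H has_vector_derivative 1 / (1 + u * (a - 1)) * (1 / (1 + u * (b - 1))) * (a - b))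
      (at u within {0..1})" if u: "u \<in> {0..1}" for u
    using one_plus_scaled_pos[OF a u] one_plus_scaled_pos[OF b u]
    unfolding H_def has_real_derivative_iff_has_vector_derivative[symmetric]
    by (auto intro!: derivative_eq_intros simp: field_simps)
  then have "((\<lambda>u. 1 / (1 + u * (a - 1)) * (1 / (1 + u * (b - 1))) * (a - b)) has_integral H 1 - H 0)
      {0..1}"
    by (intro fundamental_theorem_of_calculus) auto
  then show ?thesis
    by (simp add: H_def integral_unique flip: integral_mult_left)
qed

lemma integral_of_real_eq:
  "f integrable_on S \<Longrightarrow> integral S (\<lambda>x. complex_of_real (f x)) = of_real (integral S f)"
  by (intro integral_unique has_integral_of_real integrable_integral)

lemma ln_divided_difference_integral_complex:
  fixes a b :: real
  assumes a: "0 < a" and b: "0 < b"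
  shows "integral {0..1} (\<lambda>u. complex_of_real (1 / (1 + u * (a - 1))) * of_real (1 / (1 + u * (b - 1))))
      * (of_real a - of_real b) = of_real (ln a) - of_real (ln b)"
proof -
  let ?r = "\<lambda>u. 1 / (1 + u * (a - 1)) * (1 / (1 + u * (b - 1)))"
  have "continuous_on {0..1} ?r"
    using one_plus_scaled_nonzero[OF a] one_plus_scaled_nonzero[OF b]
    by (intro continuous_intros) auto
  then have "integral {0..1} (\<lambda>u. complex_of_real (?r u)) = of_real (integral {0..1} ?r)"
    by (intro integral_of_real_eq integrable_continuous_real)
  then have "integral {0..1} (\<lambda>u. complex_of_real (1 / (1 + u * (a - 1))) * of_real (1 / (1 + u * (b - 1))))
      * (of_real a - of_real b) = of_real (integral {0..1} ?r * (a - b))"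
    by (simp only: of_real_mult of_real_diff)
  then show ?thesis
    by (simp only: ln_divided_difference_integral[OF a b] of_real_diff)
qed

lemma inverse_square_integral:
  fixes m :: real
  assumes "0 < m"
  shows "((\<lambda>u. 1 / (1 + u * (m - 1)) * (1 / (1 + u * (m - 1)))) has_integral 1 / m) {0..1}"
proof -
  have "((\<lambda>u. u / (1 + u * (m - 1))) has_vector_derivative 1 / (1 + u * (m - 1)) * (1 / (1 + u * (m - 1))))
      (at u within {0..1})" if u: "u \<in> {0..1}" for u
    using one_plus_scaled_pos[OF assms u]
    unfolding has_real_derivative_iff_has_vector_derivative[symmetric]
    by (auto intro!: derivative_eq_intros simp: field_simps)
  then show ?thesis
    using fundamental_theorem_of_calculus[of 0 1 "\<lambda>u. u / (1 + u * (m - 1))"] by simp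
qed

lemma opnorm_schur_exp_divided_difference_le:
  fixes p q :: "'n::finite \<Rightarrow> real" and z :: complex
  assumes p: "\<And>i. \<bar>p i\<bar> \<le> L" and q: "\<And>j. \<bar>q j\<bar> \<le> L"
  shows "opnorm (schur_product (\<lambda>i j. exp (z * of_real (p i)) - exp (z * of_real (q j))) X)
    \<le> cmod z * exp (\<bar>Re z\<bar> * L) * opnorm (schur_product (\<lambda>i j. of_real (p i) - of_real (q j)) X)"
proof -
  define k where "k = \<bar>Re z\<bar> * L"
  define f where "f s i = z * exp (of_real s * z * of_real (p i))" for s :: real and i
  define g where "g s j = exp (of_real (1 - s) * z * of_real (q j))" for s :: real and j
  have exp_bound: "cmod (exp (of_real t * z * of_real r)) \<le> exp (t * k)"
    if "0 \<le> t" "\<bar>r\<bar> \<le> L" for t r :: real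
  proof -
    have "Re z * r \<le> \<bar>Re z\<bar> * \<bar>r\<bar>"
      by (metis abs_ge_self abs_mult)
    also have "\<dots> \<le> k"
      unfolding k_def using that(2) by (intro mult_left_mono) simp_all
    finally have "t * (Re z * r) \<le> t * k"
      using that(1) by (rule mult_left_mono)
    then show ?thesis by (simp add: norm_exp_eq_Re mult.assoc)
  qed
  have "integral {0..1} (\<lambda>s. f s i * g s j) * (of_real (p i) - of_real (q j))
      = exp (z * of_real (p i)) - exp (z * of_real (q j))" for i j
    unfolding f_def g_def by (rule exp_divided_difference_integral)
  then have "schur_product (\<lambda>i j. exp (z * of_real (p i)) - exp (z * of_real (q j))) X
      = schur_product (\<lambda>i j. integral {0..1} (\<lambda>s. f s i * g s j))
          (schur_product (\<lambda>i j. of_real (p i) - of_real (q j)) X)"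
    by (simp add: schur_product_schur_product)
  also have "opnorm \<dots> \<le> cmod z * exp k * opnorm (schur_product (\<lambda>i j. of_real (p i) - of_real (q j)) X)"
  proof (rule opnorm_schur_product_integral_le
      [where F = "\<lambda>s. cmod z * exp (s * k)" and G = "\<lambda>s. exp ((1 - s) * k)"])
    show "cmod (f s i) \<le> cmod z * exp (s * k)" if "s \<in> {0..1}" for s i
      unfolding f_def norm_mult using exp_bound[of s "p i"] that p[of i]
      by (intro mult_left_mono) simp_all
    show "cmod (g s j) \<le> exp ((1 - s) * k)" if "s \<in> {0..1}" for s j
      unfolding g_def using exp_bound[of "1 - s" "q j"] that q[of j] by simp
    have "(\<lambda>s. cmod z * exp (s * k) * exp ((1 - s) * k)) = (\<lambda>s. cmod z * exp k)"
      by (simp add: fun_eq_iff mult.assoc algebra_simps flip: exp_add)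
    then show "integral {0..1} (\<lambda>s. cmod z * exp (s * k) * exp ((1 - s) * k)) \<le> cmod z * exp k"
      by simp
  qed (auto simp: f_def g_def intro!: continuous_intros)
  finally show ?thesis by (simp add: k_def)
qed

lemma opnorm_schur_ln_divided_difference_le:
  fixes a b :: "'n::finite \<Rightarrow> real"
  assumes m: "0 < m" and a: "\<And>i. m \<le> a i" and b: "\<And>j. m \<le> b j"
  shows "opnorm (schur_product (\<lambda>i j. of_real (ln (a i)) - of_real (ln (b j))) X)
    \<le> 1 / m * opnorm (schur_product (\<lambda>i j. of_real (a i) - of_real (b j)) X)"
proof -
  have a_pos: "0 < a i" and b_pos: "0 < b i" for i
    using m a[of i] b[of i] by linarith+
  define f where "f u i = complex_of_real (1 / (1 + u * (a i - 1)))" for u :: real and i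
  define g where "g u j = complex_of_real (1 / (1 + u * (b j - 1)))" for u :: real and j
  define F where "F u = 1 / (1 + u * (m - 1))" for u :: real
  have bound: "cmod (complex_of_real (1 / (1 + u * (x - 1)))) \<le> F u"
    if u: "u \<in> {0..1}" and x: "m \<le> x" for u x :: real
  proof -
    have "1 + u * (m - 1) \<le> 1 + u * (x - 1)"
      using u x by (simp add: mult_left_mono)
    moreover have "0 < 1 + u * (m - 1)"
      using one_plus_scaled_pos[OF m u] .
    ultimately show ?thesis
      unfolding norm_of_real F_def by (simp add: frac_le)
  qed
  have f_cont: "continuous_on {0..1} (\<lambda>u. f u i)" for i
    unfolding f_def by (intro continuous_intros one_plus_scaled_nonzero a_pos)
  have g_cont: "continuous_on {0..1} (\<lambda>u. g u j)" for j
    unfolding g_def by (intro continuous_intros one_plus_scaled_nonzero b_pos)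
  have "schur_product (\<lambda>i j. of_real (ln (a i)) - of_real (ln (b j))) X
      = schur_product (\<lambda>i j. integral {0..1} (\<lambda>u. f u i * g u j))
          (schur_product (\<lambda>i j. of_real (a i) - of_real (b j)) X)"
    using ln_divided_difference_integral_complex[OF a_pos b_pos]
    by (simp add: schur_product_schur_product f_def g_def)
  also have "opnorm \<dots> \<le> 1 / m * opnorm (schur_product (\<lambda>i j. of_real (a i) - of_real (b j)) X)"
  proof (rule opnorm_schur_product_integral_le[where F = F and G = F])
    show "continuous_on {0..1} (\<lambda>u. F u * F u)"
      unfolding F_def by (intro continuous_intros one_plus_scaled_nonzero m)
    show "integral {0..1} (\<lambda>u. F u * F u) \<le> 1 / m"
      using integral_unique[OF inverse_square_integral[OF m]] by (simp add: F_def)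
    show "cmod (f u i) \<le> F u" if "u \<in> {0..1}" for u i
      unfolding f_def using that a by (rule bound)
    show "cmod (g u j) \<le> F u" if "u \<in> {0..1}" for u j
      unfolding g_def using that b by (rule bound)
  qed (fact f_cont g_cont)+
  finally show ?thesis .
qed

lemma abs_ln_le_ln:
  fixes x M :: real
  assumes "0 < x" "x \<le> M" "1 / M \<le> x"
  shows "\<bar>ln x\<bar> \<le> ln M"
proof -
  have "0 < M" using assms by linarith
  then have "- ln x \<le> ln M"
    using assms ln_le_cancel_iff[of "1 / M" x] by (simp add: ln_div)
  moreover have "ln x \<le> ln M"
    using assms \<open>0 < M\<close> by simp
  ultimately show ?thesis by (simp add: abs_le_iff)
qed

theorem mainTheorem11:
  fixes A B :: "complex^'n^'n" and z :: complex
  assumes "pos_def A" and "pos_def B"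
  shows "opnorm (mcpow A z - mcpow B z)
    \<le> cmod z * (Max {opnorm A, opnorm (matrix_inv A), opnorm B, opnorm (matrix_inv B)})
         powr (1 + \<bar>Re z\<bar>) * opnorm (A - B)"
proof -
  define M where "M = Max {opnorm A, opnorm (matrix_inv A), opnorm B, opnorm (matrix_inv B)}"
  obtain U a where U: "unitary U" and A: "A = U ** diag_mat (\<lambda>i. complex_of_real (a i)) ** conj_transpose U"
    and a: "\<And>i. 0 < a i" "\<And>i. 1 / M \<le> a i" "\<And>i. a i \<le> M"
    by (rule pos_def_unitary_diagonalization_within[OF assms(1), of M]) (simp_all add: M_def)
  obtain V b where V: "unitary V" and B: "B = V ** diag_mat (\<lambda>i. complex_of_real (b i)) ** conj_transpose V"
    and b: "\<And>i. 0 < b i" "\<And>i. 1 / M \<le> b i" "\<And>i. b i \<le> M"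
    by (rule pos_def_unitary_diagonalization_within[OF assms(2), of M]) (simp_all add: M_def)
  have M_pos: "0 < M" using a(1,3) by (meson order_less_le_trans)
  have M_powr: "M powr (1 + \<bar>Re z\<bar>) = M * exp (\<bar>Re z\<bar> * ln M)"
    using M_pos by (simp add: powr_def distrib_right exp_add)
  let ?W = "conj_transpose U ** V"
  have "opnorm (mcpow A z - mcpow B z) = opnorm (schur_product
      (\<lambda>i j. exp (z * of_real (ln (a i))) - exp (z * of_real (ln (b j)))) ?W)"
    by (simp add: mcpow_conj_diag_mat[OF U a(1) A] mcpow_conj_diag_mat[OF V b(1) B]
        conj_diag_mat_diff_eq_schur_product[OF U V] opnorm_unitary_conj[OF U unitary_conj_transpose[OF V]])
  also have "\<dots> \<le> cmod z * exp (\<bar>Re z\<bar> * ln M)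
      * opnorm (schur_product (\<lambda>i j. of_real (ln (a i)) - of_real (ln (b j))) ?W)"
    by (intro opnorm_schur_exp_divided_difference_le abs_ln_le_ln a b)
  also have "\<dots> \<le> cmod z * exp (\<bar>Re z\<bar> * ln M)
      * (M * opnorm (schur_product (\<lambda>i j. of_real (a i) - of_real (b j)) ?W))"
    using opnorm_schur_ln_divided_difference_le[of "1 / M" a b ?W] M_pos a b
    by (intro mult_left_mono) simp_all
  also have "opnorm (schur_product (\<lambda>i j. of_real (a i) - of_real (b j)) ?W) = opnorm (A - B)"
    by (simp add: A B conj_diag_mat_diff_eq_schur_product[OF U V]
        opnorm_unitary_conj[OF U unitary_conj_transpose[OF V]])
  also have "cmod z * exp (\<bar>Re z\<bar> * ln M) * (M * opnorm (A - B))
      = cmod z * M powr (1 + \<bar>Re z\<bar>) * opnorm (A - B)"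
    by (simp add: M_powr mult_ac)
  finally show ?thesis by (simp only: M_def)
qed

end
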